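(* Consider the closed-loop system $\dot x = f^{\mathsf c}(x,w)$, $x\in\mathbb{R}^n$, with disturbance set $\mathcal W=[\underline w,\overline w]\subseteq\mathbb{R}^q$, where $f^{\mathsf c}$ is continuous and locally Lipschitz in $x$. Let $\mathsf F^{\mathsf c}_{\mathcal S}=(\underline{\mathsf F}^{\mathsf c}_{\mathcal S},\overline{\mathsf F}^{\mathsf c}_{\mathcal S})$ be an $\mathcal S$-localized inclusion function for $f^{\mathsf c}$, and let $\mathsf E_{\mathcal S}$ be the embedding system induced by $\mathsf F^{\mathsf c}_{\mathcal S}$. Let $[\underline x^\star,\overline x^\star]\subseteq\mathcal S$ be an interval. If $$\mathsf E_{\mathcal S}(\underline x^\star,\overline x^\star,\underline w,\overline w)\ \ge_{\mathrm{SE}}\ 0,$$ i.e. $\underline{\mathsf E}_{\mathcal S}(\underline x^\star,\overline x^\star,\underline w,\overline w)\ge 0$ and $\overline{\mathsf E}_{\mathcal S}(\underline x^\star,\overline x^\star,\underline w,\overline w)\le 0$ componentwise, then $[\underline x^\star,\overline x^\star]$ is a $[\underline w,\overline w]$-robustly forward invariant set for $\dot x=f^{\mathsf c}(x,w)$. Moreover, if $\mathsf F^{\mathsf c}_{\mathcal S}$ is the minimal inclusion function of $f^{\mathsf c}$ (jointly in $(x,w)$), then this condition is also necessary for $[\underline x^\star,\overline x^\star]$ to be $[\underline w,\overline w]$-robustly forward invariant.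
   Context: Order and intervals: for $x,y\in\mathbb{R}^n$, $x\le y$ means $x_i\le y_i$ for all $i$; for $\underline x\le\overline x$, $[\underline x,\overline x]=\{x:\underline x\le x\le\overline x\}$. Let $\mathcal T^{2n}_{\ge0}=\{(x,\hat x)\in\mathbb{R}^{2n}: x\le\hat x\}$, identified with intervals of $\mathbb{R}^n$. The southeast order on $\mathbb{R}^{2n}$: $(x,\hat x)\le_{\mathrm{SE}}(y,\hat y)$ iff $x\le y$ and $\hat y\le\hat x$; in particular $(a,b)\ge_{\mathrm{SE}}0$ means $a\ge 0$ and $b\le 0$. For $x,y\in\mathbb{R}^n$ and index $i$, $x_{i:y}$ denotes the vector $x$ with its $i$-th entry replaced by $y_i$. Inclusion functions: for $h:\mathbb{R}^m\to\mathbb{R}^k$, a map $\mathsf H=(\underline{\mathsf H},\overline{\mathsf H}):\mathcal T^{2m}_{\ge0}\to\mathcal T^{2k}_{\ge0}$ is an $\mathcal S$-localized inclusion function for $h$ if $\underline{\mathsf H}(\underline z,\overline z)\le h(z)\le\overline{\mathsf H}(\underline z,\overline z)$ for every $z\in[\underline z,\overline z]$ and every interval $[\underline z,\overline z]\subseteq\mathcal S$. For $f^{\mathsf c}(x,w)$ the argument is $(\underline x,\overline x,\underline w,\overline w)$ and localization refers to $[\underline x,\overline x]\subseteq\mathcal S$ (with $w$ ranging over $[\underline w,\overline w]$). The minimal inclusion function has $\underline{\mathsf F}_i=\inf_{x\in[\underline x,\overline x],w\in[\underline w,\overline w]} f^{\mathsf c}_i(x,w)$ and $\overline{\mathsf F}_i=\sup$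 of the same. Embedding system induced by $\mathsf F^{\mathsf c}_{\mathcal S}$: the map $\mathsf E_{\mathcal S}=(\underline{\mathsf E}_{\mathcal S},\overline{\mathsf E}_{\mathcal S}):\mathcal T^{2n}_{\ge0}\times\mathcal T^{2q}_{\ge0}\to\mathbb{R}^{2n}$ with components $(\underline{\mathsf E}_{\mathcal S}(\underline x,\overline x,\underline w,\overline w))_i=(\underline{\mathsf F}^{\mathsf c}_{\mathcal S}(\underline x,\overline x_{i:\underline x},\underline w,\overline w))_i$ and $(\overline{\mathsf E}_{\mathcal S}(\underline x,\overline x,\underline w,\overline w))_i=(\overline{\mathsf F}^{\mathsf c}_{\mathcal S}(\underline x_{i:\overline x},\overline x,\underline w,\overline w))_i$, $i=1,\dots,n$; the embedding system is $\dot{\underline x}=\underline{\mathsf E}_{\mathcal S}$, $\dot{\overline x}=\overline{\mathsf E}_{\mathcal S}$. Robust forward invariance: a set $\mathcal X$ is $\mathcal W$-robustly forward invariant if every solution $\phi(t,x_0,\mathbf w)$ with $x_0\in\mathcal X$ and any piecewise continuous $\mathbf w:\mathbb{R}\to\mathcal W$ satisfies $\phi(t,x_0,\mathbf w)\in\mathcal X$ for all $t\ge0$. *)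

theory Defs
  imports "HOL-Analysis.Analysis"
begin

text \<open>Vectors in R^n are real^'n, with componentwise order (less_eq_vec);
  intervals are {xl..xu}. Inclusion functions are pairs of maps
  (lower, upper) taking (xl, xu, wl, wu).\<close>

type_synonym ('n,'q) incl_fun =
  "real^'n \<Rightarrow> real^'n \<Rightarrow> real^'q \<Rightarrow> real^'q \<Rightarrow> real^'n"

definition repl :: "real^'n \<Rightarrow> 'n \<Rightarrow> real^'n \<Rightarrow> real^'n" where
  "repl x i y = (\<chi> j. if j = i then y $ j else x $ j)"

definition locally_lipschitz_in_x :: "(real^'n \<Rightarrow> real^'q \<Rightarrow> real^'n) \<Rightarrow> bool" where
  "locally_lipschitz_in_x f \<longleftrightarrow>
     (\<forall>x0 w0. \<exists>e>0. \<exists>L. \<forall>x1 x2 w. x1 \<in> ball x0 e \<and> x2 \<in> ball x0 e \<and> w \<in> ball w0 e \<longrightarrow>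
        dist (f x1 w) (f x2 w) \<le> L * dist x1 x2)"

definition localized_inclusion_function ::
  "(real^'n) set \<Rightarrow> (real^'n \<Rightarrow> real^'q \<Rightarrow> real^'n) \<Rightarrow> ('n,'q) incl_fun \<Rightarrow> ('n,'q) incl_fun \<Rightarrow> bool" where
  "localized_inclusion_function S f Fl Fu \<longleftrightarrow>
     (\<forall>xl xu wl wu. xl \<le> xu \<and> wl \<le> wu \<and> {xl..xu} \<subseteq> S \<longrightarrow>
        (\<forall>x\<in>{xl..xu}. \<forall>w\<in>{wl..wu}. Fl xl xu wl wu \<le> f x w \<and> f x w \<le> Fu xl xu wl wu))"

definition minimal_inclusion_function ::
  "(real^'n \<Rightarrow> real^'q \<Rightarrow> real^'n) \<Rightarrow> ('n,'q) incl_fun \<Rightarrow> ('n,'q) incl_fun \<Rightarrow> bool" where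
  "minimal_inclusion_function f Fl Fu \<longleftrightarrow>
     (\<forall>xl xu wl wu. xl \<le> xu \<and> wl \<le> wu \<longrightarrow>
        Fl xl xu wl wu = (\<chi> i. Inf {f x w $ i | x w. x \<in> {xl..xu} \<and> w \<in> {wl..wu}}) \<and>
        Fu xl xu wl wu = (\<chi> i. Sup {f x w $ i | x w. x \<in> {xl..xu} \<and> w \<in> {wl..wu}}))"

definition emb_lower :: "('n::finite,'q::finite) incl_fun \<Rightarrow> ('n,'q) incl_fun" where
  "emb_lower Fl xl xu wl wu = (\<chi> i. Fl xl (repl xu i xl) wl wu $ i)"

definition emb_upper :: "('n::finite,'q::finite) incl_fun \<Rightarrow> ('n,'q) incl_fun" where
  "emb_upper Fu xl xu wl wu = (\<chi> i. Fu (repl xl i xu) xu wl wu $ i)"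

definition piecewise_continuous :: "(real \<Rightarrow> 'a::topological_space) \<Rightarrow> bool" where
  "piecewise_continuous w \<longleftrightarrow>
     (\<forall>a b. \<exists>D. finite D \<and> (\<forall>t\<in>{a..b} - D. isCont w t) \<and>
        (\<forall>t\<in>D. (\<exists>l. (w \<longlongrightarrow> l) (at_left t)) \<and> (\<exists>r. (w \<longlongrightarrow> r) (at_right t))))"

text \<open>(Caratheodory) solution of x' = f(x, w(t)) on [0,T] starting at x0.\<close>
definition is_solution ::
  "(real^'n \<Rightarrow> real^'q \<Rightarrow> real^'n) \<Rightarrow> (real \<Rightarrow> real^'q) \<Rightarrow> real^'n \<Rightarrow> real \<Rightarrow> (real \<Rightarrow> real^'n) \<Rightarrow> bool" where
  "is_solution f w x0 T x \<longleftrightarrow> 0 \<le> T \<and> x 0 = x0 \<and> continuous_on {0..T} x \<and>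
     (\<forall>t\<in>{0..T}. ((\<lambda>s. f (x s) (w s)) has_integral (x t - x0)) {0..t})"

definition robustly_forward_invariant ::
  "(real^'n \<Rightarrow> real^'q \<Rightarrow> real^'n) \<Rightarrow> (real^'n) set \<Rightarrow> (real^'q) set \<Rightarrow> bool" where
  "robustly_forward_invariant f X W \<longleftrightarrow>
     (\<forall>x0\<in>X. \<forall>w. piecewise_continuous w \<and> (\<forall>t. w t \<in> W) \<longrightarrow>
        (\<forall>T x. is_solution f w x0 T x \<longrightarrow> (\<forall>t\<in>{0..T}. x t \<in> X)))"

end

theory Submission
  imports Defs
begin

text \<open>The condition E >=SE 0 says, through the inclusion property on the faces
  [xl, xu_{i:xl}] and [xl_{i:xu}, xu] of the box, that f points into the box on each face, for every
  disturbance in W. An inward-pointing field keeps solutions in the box (a Nagumo-type argument):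
  near a first exit time t0 the field is L-Lipschitz, and comparing f(x) with f at the clamped
  point shows that each component of the excess x - clamp(x) grows at most like L m (t - t0), where
  m is the largest excess on [t0, t0 + h]. For small h this forces m <= m/2, so m = 0.
  Conversely, for the minimal inclusion function the components of E are the infimum and the
  supremum of f_i over the faces. If f_i pointed outward at some point of a face, the solution with
  constant disturbance starting there, obtained by Picard iteration, would leave the box at once.\<close>

definition inward_on_box ::
  "(real^'n \<Rightarrow> real^'q \<Rightarrow> real^'n) \<Rightarrow> real^'n \<Rightarrow> real^'n \<Rightarrow> (real^'q) set \<Rightarrow> bool" where
  "inward_on_box f xl xu W \<longleftrightarrow>
     (\<forall>y\<in>{xl..xu}. \<forall>v\<in>W. \<forall>j.
        (y $ j = xl $ j \<longrightarrow> 0 \<le> f y v $ j) \<and> (y $ j = xu $ j \<longrightarrow> f y v $ j \<le> 0))"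

lemma clamp_nth:
  fixes a b x :: "real^'n"
  assumes "a \<le> b"
  shows "clamp a b x $ j = max (a $ j) (min (b $ j) (x $ j))"
proof -
  have "\<forall>i\<in>Basis. a \<bullet> i \<le> b \<bullet> i"
    using assms by (auto simp: Basis_vec_def inner_axis less_eq_vec_def)
  then have "clamp a b x $ j = (if x $ j < a $ j then a $ j else if x $ j \<le> b $ j then x $ j else b $ j)"
    unfolding clamp_def cart_eq_inner_axis[of _ j]
    by (subst if_P, assumption, subst inner_sum_left_Basis) (auto simp: inner_axis)
  then show ?thesis
    using assms by (auto simp: less_eq_vec_def)
qed

lemma clamp_in_box: "a \<le> b \<Longrightarrow> clamp a b x \<in> {a..b :: real^'n}"
  by (auto simp: clamp_nth less_eq_vec_def)

lemma clamp_box_self: "x \<in> {a..b :: real^'n} \<Longrightarrow> clamp a b x = x"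
  by (simp add: interval_cbox_cart)

lemma norm_le_card_mult:
  fixes v :: "real^'n" and B :: real
  assumes "\<And>j. \<bar>v $ j\<bar> \<le> B"
  shows "norm v \<le> CARD('n) * B"
  using norm_le_l1_cart[of v] sum_mono[of UNIV "\<lambda>j. \<bar>v $ j\<bar>" "\<lambda>_. B"] assms by simp

lemma has_integral_vec_nth:
  "(F has_integral y) S \<Longrightarrow> ((\<lambda>s. F s $ j) has_integral y $ j) S"
  using has_integral_linear[OF _ bounded_linear_vec_nth, of F y S j] by (simp add: o_def)

lemma has_integral_primitive_subinterval:
  fixes F :: "real \<Rightarrow> 'a::euclidean_space"
  assumes prim: "\<And>t. t \<in> {0..T} \<Longrightarrow> (F has_integral (x t - p)) {0..t}"
    and ab: "0 \<le> a" "a \<le> b" "b \<le> T"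
  shows "(F has_integral (x b - x a)) {a..b}"
proof -
  have ib: "(F has_integral (x b - p)) {0..b}" and ia: "(F has_integral (x a - p)) {0..a}"
    using ab by (auto intro!: prim)
  have "F integrable_on {a..b}"
    using integrable_subinterval_real[OF has_integral_integrable[OF ib]] ab by simp
  then obtain j where j: "(F has_integral j) {a..b}"
    by blast
  have "(F has_integral ((x a - p) + j)) {0..b}"
    by (rule has_integral_combine[OF _ _ ia j]) (use ab in auto)
  then have "(x a - p) + j = x b - p"
    using ib by (rule has_integral_unique)
  then have "j = x b - x a"
    by (simp add: algebra_simps)
  then show ?thesis
    using j by simp
qed

text \<open>Integrate \<open>F\<close> from the last time at which \<open>u \<ge> c\<close>.\<close>
lemma integral_barrier:
  fixes u F :: "real \<Rightarrow> real"
  assumes tt: "t0 \<le> t" and cu: "continuous_on {t0..t} u" and c0: "c \<le> u t0" and K: "0 \<le> K"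
    and prim: "\<And>a b. t0 \<le> a \<Longrightarrow> a \<le> b \<Longrightarrow> b \<le> t \<Longrightarrow> (F has_integral (u b - u a)) {a..b}"
    and lb: "\<And>s. s \<in> {t0..t} \<Longrightarrow> u s \<le> c \<Longrightarrow> -K \<le> F s"
  shows "c - u t \<le> K * (t - t0)"
proof -
  define A where "A = {t0..t} \<inter> u -` {c..}"
  have "closed A"
    unfolding A_def by (rule continuous_closed_preimage[OF cu]) auto
  moreover have "A \<noteq> {}" "bdd_above A"
    using tt c0 by (auto simp: A_def intro: bdd_aboveI[of _ t])
  ultimately have "Sup A \<in> A"
    by (intro closed_contains_Sup)
  then obtain s1 where s1: "s1 = Sup A" "t0 \<le> s1" "s1 \<le> t" "c \<le> u s1"
    unfolding A_def by auto
  have below: "u s < c" if "s \<in> {s1<..t}" for s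
    using cSup_upper[of s A] \<open>bdd_above A\<close> that s1 by (force simp: A_def)
  then have F_lb: "-K \<le> F s" if "s \<in> {s1<..t}" for s
    using lb that s1 by fastforce
  have "((\<lambda>s. -K) has_integral (t - s1) * (-K)) {s1..t}"
    using has_integral_const_real[of "-K" s1 t] s1 by simp
  moreover have "((\<lambda>s. if s = s1 then -K else F s) has_integral (u t - u s1)) {s1..t}"
    by (rule has_integral_spike_finite[of "{s1}" _ _ F]) (use prim s1 in auto)
  ultimately have "(t - s1) * (-K) \<le> u t - u s1"
    by (rule has_integral_le) (use F_lb in auto)
  moreover have "K * (t - s1) \<le> K * (t - t0)"
    using K s1 by (intro mult_left_mono) auto
  ultimately show ?thesis
    using s1 by (simp add: algebra_simps)
qed

lemma locally_lipschitz_in_x_uniform: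
  fixes f :: "real^'n \<Rightarrow> real^'q \<Rightarrow> real^'n"
  assumes lip: "locally_lipschitz_in_x f" and W: "compact W"
  obtains e L where "e > 0" "\<And>w. w \<in> W \<Longrightarrow> L-lipschitz_on (ball p e) (\<lambda>x. f x w)"
proof -
  obtain E LL where E: "\<And>w0. E w0 > 0"
    and EL: "\<And>w0 x1 x2 w. x1 \<in> ball p (E w0) \<Longrightarrow> x2 \<in> ball p (E w0) \<Longrightarrow> w \<in> ball w0 (E w0) \<Longrightarrow>
        dist (f x1 w) (f x2 w) \<le> LL w0 * dist x1 x2"
    using lip unfolding locally_lipschitz_in_x_def by metis
  obtain K where K: "K \<subseteq> W" "finite K" "W \<subseteq> (\<Union>w0\<in>K. ball w0 (E w0))"
    using compactE_image[OF W, of W "\<lambda>w0. ball w0 (E w0)"] E by force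
  define e where "e = Min (insert 1 (E ` K))"
  define L where "L = Max (insert 0 (LL ` K))"
  have "L-lipschitz_on (ball p e) (\<lambda>x. f x w)" if w: "w \<in> W" for w
  proof (rule lipschitz_onI)
    obtain w0 where w0: "w0 \<in> K" "w \<in> ball w0 (E w0)"
      using K(3) w by blast
    fix x1 x2 assume "x1 \<in> ball p e" "x2 \<in> ball p e"
    moreover have "e \<le> E w0"
      unfolding e_def using K w0 by auto
    ultimately have "dist (f x1 w) (f x2 w) \<le> LL w0 * dist x1 x2"
      using w0 by (intro EL) auto
    also have "\<dots> \<le> L * dist x1 x2"
      unfolding L_def using K w0 by (intro mult_right_mono) auto
    finally show "dist (f x1 w) (f x2 w) \<le> L * dist x1 x2" .
  qed (use K in \<open>auto simp: L_def\<close>)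
  moreover have "e > 0"
    unfolding e_def using K E by (subst Min_gr_iff) auto
  ultimately show ?thesis
    using that by blast
qed

lemma solution_box_excess_le:
  fixes f :: "real^'n \<Rightarrow> real^'q \<Rightarrow> real^'n"
  assumes box: "xl \<le> xu" and inward: "inward_on_box f xl xu W" and wW: "\<And>s. w s \<in> W"
    and sol: "is_solution f w x0 T x" and t: "0 \<le> t0" "t0 \<le> t" "t \<le> T" "x t0 \<in> {xl..xu}"
    and near: "\<And>s. s \<in> {t0..t} \<Longrightarrow> \<bar>f (x s) (w s) $ j - f (clamp xl xu (x s)) (w s) $ j\<bar> \<le> K"
  shows "\<bar>(x t - clamp xl xu (x t)) $ j\<bar> \<le> K * (t - t0)"
proof -
  have K: "0 \<le> K"
    using order_trans[OF abs_ge_zero near[of t0]] t by simp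
  have cx: "continuous_on {t0..t} (\<lambda>s. x s $ j)"
    using sol t by (auto simp: is_solution_def intro!: continuous_on_component elim: continuous_on_subset)
  have prim: "((\<lambda>s. f (x s) (w s) $ j) has_integral (x b $ j - x a $ j)) {a..b}"
    if "t0 \<le> a" "a \<le> b" "b \<le> t" for a b
  proof -
    have "((\<lambda>s. f (x s) (w s)) has_integral (x b - x a)) {a..b}"
      by (rule has_integral_primitive_subinterval[where p = x0 and T = T])
        (use sol that t in \<open>auto simp: is_solution_def\<close>)
    from has_integral_vec_nth[OF this, of j] show ?thesis
      by simp
  qed
  have clamp_lower: "0 \<le> f (clamp xl xu (x s)) (w s) $ j" if "x s $ j \<le> xl $ j" for s
    using inward clamp_in_box[OF box] wW that box
    by (auto simp: inward_on_box_def clamp_nth less_eq_vec_def)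
  have clamp_upper: "f (clamp xl xu (x s)) (w s) $ j \<le> 0" if "xu $ j \<le> x s $ j" for s
    using inward clamp_in_box[OF box] wW that box
    by (auto simp: inward_on_box_def clamp_nth less_eq_vec_def)
  consider (below) "x t $ j < xl $ j" | (above) "xu $ j < x t $ j" | (inside) "xl $ j \<le> x t $ j" "x t $ j \<le> xu $ j"
    by fastforce
  then show ?thesis
  proof cases
    case below
    have "xl $ j - x t $ j \<le> K * (t - t0)"
    proof (rule integral_barrier[OF t(2) cx _ K prim])
      show "xl $ j \<le> x t0 $ j"
        using t(4) by (simp add: less_eq_vec_def)
      fix s assume "s \<in> {t0..t}" "x s $ j \<le> xl $ j"
      then show "- K \<le> f (x s) (w s) $ j"
        using near[of s] clamp_lower[of s] by (simp add: abs_le_iff)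
    qed
    then show ?thesis
      using below box by (simp add: clamp_nth)
  next
    case above
    have "- xu $ j - - x t $ j \<le> K * (t - t0)"
    proof (rule integral_barrier[OF t(2) continuous_on_minus[OF cx] _ K])
      show "- xu $ j \<le> - x t0 $ j"
        using t(4) by (simp add: less_eq_vec_def)
      show "((\<lambda>s. - f (x s) (w s) $ j) has_integral (- x b $ j - - x a $ j)) {a..b}"
        if "t0 \<le> a" "a \<le> b" "b \<le> t" for a b
        using has_integral_neg[OF prim[OF that]] by simp
      fix s assume "s \<in> {t0..t}" "- x s $ j \<le> - xu $ j"
      then show "- K \<le> - f (x s) (w s) $ j"
        using near[of s] clamp_upper[of s] by (simp add: abs_le_iff)
    qed
    then show ?thesis
      using above box by (simp add: clamp_nth less_eq_vec_def max_def)
  next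
    case inside
    then show ?thesis
      using K t box by (simp add: clamp_nth)
  qed
qed

lemma solution_box_distance_le:
  fixes f :: "real^'n \<Rightarrow> real^'q \<Rightarrow> real^'n" and L m t :: real
  assumes box: "xl \<le> xu" and inward: "inward_on_box f xl xu W" and wW: "\<And>s. w s \<in> W"
    and sol: "is_solution f w x0 T x" and t: "0 \<le> t0" "t0 \<le> t" "t \<le> T" "x t0 \<in> {xl..xu}"
    and lip: "\<And>v. v \<in> W \<Longrightarrow> L-lipschitz_on U (\<lambda>y. f y v)"
    and near: "\<And>s. s \<in> {t0..t} \<Longrightarrow> x s \<in> U \<and> clamp xl xu (x s) \<in> U"
    and m: "\<And>s. s \<in> {t0..t} \<Longrightarrow> dist (x s) (clamp xl xu (x s)) \<le> m"
  shows "dist (x t) (clamp xl xu (x t)) \<le> CARD('n) * (L * m * (t - t0))"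
proof -
  have "\<bar>(x t - clamp xl xu (x t)) $ j\<bar> \<le> L * m * (t - t0)" for j
  proof (rule solution_box_excess_le[OF box inward wW sol t])
    fix s assume s: "s \<in> {t0..t}"
    let ?d = "f (x s) (w s) - f (clamp xl xu (x s)) (w s)"
    have "\<bar>?d $ j\<bar> \<le> dist (f (x s) (w s)) (f (clamp xl xu (x s)) (w s))"
      using component_le_norm_cart[of ?d j] by (simp add: dist_norm)
    also have "\<dots> \<le> L * dist (x s) (clamp xl xu (x s))"
      using lip[OF wW] near[OF s] by (intro lipschitz_onD) auto
    also have "\<dots> \<le> L * m"
      using m[OF s] lipschitz_on_nonneg[OF lip[OF wW]] by (rule mult_left_mono)
    finally show "\<bar>f (x s) (w s) $ j - f (clamp xl xu (x s)) (w s) $ j\<bar> \<le> L * m"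
      by simp
  qed
  then show ?thesis
    unfolding dist_norm by (rule norm_le_card_mult)
qed

lemma solution_stays_in_box_locally:
  fixes f :: "real^'n \<Rightarrow> real^'q \<Rightarrow> real^'n"
  assumes lip: "locally_lipschitz_in_x f" and W: "compact W" and box: "xl \<le> xu"
    and inward: "inward_on_box f xl xu W" and wW: "\<And>s. w s \<in> W"
    and sol: "is_solution f w x0 T x" and t0: "0 \<le> t0" "t0 < T" "x t0 \<in> {xl..xu}"
  shows "\<exists>h>0. \<forall>t\<in>{t0..min T (t0 + h)}. x t \<in> {xl..xu}"
proof -
  obtain e L where e: "e > 0" and lipW: "\<And>v. v \<in> W \<Longrightarrow> L-lipschitz_on (ball (x t0) e) (\<lambda>y. f y v)"
    using locally_lipschitz_in_x_uniform[OF lip W, of "x t0"] by blast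
  have L: "0 \<le> L"
    using lipW[OF wW] by (rule lipschitz_on_nonneg)
  obtain d where d: "d > 0" "\<And>s. s \<in> {0..T} \<Longrightarrow> dist s t0 < d \<Longrightarrow> dist (x s) (x t0) < e"
    using sol e t0 unfolding is_solution_def continuous_on_iff by (meson atLeastAtMost_iff less_imp_le)
  define h where "h = min (d/2) (1 / (2 * CARD('n) * (L + 1)))"
  define I where "I = {t0..min T (t0 + h)}"
  have h: "0 < h" "CARD('n) * L * h \<le> 1/2"
  proof -
    show "0 < h"
      using d L by (simp add: h_def)
    have "CARD('n) * L * h \<le> CARD('n) * (L + 1) * (1 / (2 * CARD('n) * (L + 1)))"
      using L \<open>0 < h\<close> by (intro mult_mono) (auto simp: h_def)
    then show "CARD('n) * L * h \<le> 1/2"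
      using L by simp
  qed
  have I: "s \<in> {0..T}" "dist s t0 < d" "s - t0 \<le> h" if "s \<in> I" for s
    using that t0 h d by (auto simp: I_def h_def dist_real_def)
  have near: "x s \<in> ball (x t0) e \<and> clamp xl xu (x s) \<in> ball (x t0) e" if "s \<in> I" for s
  proof -
    have "x s \<in> ball (x t0) e"
      using d(2)[OF I(1,2)[OF that]] by (simp add: dist_commute)
    moreover have "dist (x t0) (clamp xl xu (x s)) \<le> dist (x t0) (x s)"
      using dist_clamps_le_dist_args[of xl xu "x t0" "x s"] clamp_box_self[OF t0(3)] by simp
    ultimately show ?thesis
      by simp
  qed
  define V where "V s = dist (x s) (clamp xl xu (x s))" for s
  have "V s \<le> 2 * e" if "s \<in> I" for s
    using dist_triangle[of "x s" "clamp xl xu (x s)" "x t0"] near[OF that] by (simp add: V_def dist_commute)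
  then have "bdd_above (V ` I)"
    by (intro bdd_aboveI[of _ "2 * e"]) auto
  define m where "m = Sup (V ` I)"
  have Vm: "V s \<le> m" if "s \<in> I" for s
    unfolding m_def using that \<open>bdd_above (V ` I)\<close> by (rule cSUP_upper)
  have "t0 \<in> I"
    using t0 h by (simp add: I_def)
  then have m: "0 \<le> m"
    using Vm[of t0] by (simp add: V_def order_trans[OF zero_le_dist])
  have "V t \<le> m / 2" if t: "t \<in> I" for t
  proof -
    have sub: "{t0..t} \<subseteq> I"
      using t by (auto simp: I_def)
    have "V t \<le> CARD('n) * (L * m * (t - t0))"
      unfolding V_def using t0 t I[OF t] near Vm sub
      by (intro solution_box_distance_le[OF box inward wW sol _ _ _ _ lipW]) (auto simp: I_def V_def)
    also have "\<dots> \<le> CARD('n) * (L * m * h)"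
      using I[OF t] L m by (intro mult_left_mono) auto
    also have "\<dots> \<le> 1/2 * m"
      using mult_right_mono[OF h(2) m] by (simp add: algebra_simps)
    finally show ?thesis
      by simp
  qed
  then have "m \<le> m / 2"
    unfolding m_def using \<open>t0 \<in> I\<close> by (intro cSUP_least) auto
  then have "V t = 0" if "t \<in> I" for t
    using Vm[OF that] m by (simp add: V_def)
  then have "x t \<in> {xl..xu}" if "t \<in> I" for t
    using clamp_in_box[OF box, of "x t"] that by (simp add: V_def)
  then show ?thesis
    using h(1) unfolding I_def by blast
qed

lemma continuation_in_closed_set:
  fixes x :: "real \<Rightarrow> 'a::topological_space"
  assumes cx: "continuous_on {0..T} x" and C: "closed C" and x0: "x 0 \<in> C"
    and continue: "\<And>t0. 0 \<le> t0 \<Longrightarrow> t0 < T \<Longrightarrow> x t0 \<in> C \<Longrightarrow> \<exists>h>0. \<forall>t\<in>{t0..min T (t0 + h)}. x t \<in> C"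
    and t: "t \<in> {0..T}"
  shows "x t \<in> C"
proof (rule ccontr)
  define B where "B = {s \<in> {0..T}. x s \<notin> C}"
  assume "x t \<notin> C"
  then have B: "t \<in> B" "bdd_below B"
    using t by (auto simp: B_def intro: bdd_belowI[of _ 0])
  define t0 where "t0 = Inf B"
  have t0: "0 \<le> t0" "t0 \<le> t"
    using B by (auto simp: t0_def B_def intro: cInf_greatest cInf_lower)
  have "{0..<t0} \<subseteq> {0..T} \<inter> x -` C"
    using cInf_lower[OF _ B(2)] t t0 by (force simp: t0_def B_def)
  then have "closure {0..<t0} \<subseteq> {0..T} \<inter> x -` C"
    by (intro closure_minimal continuous_closed_preimage[OF cx _ C]) auto
  then have "x t0 \<in> C"
    using x0 t0 closure_atLeastLessThan[of 0 t0] by (cases "t0 = 0") auto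
  moreover have "x t \<notin> C"
    using B(1) by (simp add: B_def)
  ultimately have "t0 < T"
    using t t0 by (cases "t0 = t") auto
  with continue obtain h where h: "h > 0" "\<forall>s\<in>{t0..min T (t0 + h)}. x s \<in> C"
    using t0 \<open>x t0 \<in> C\<close> by blast
  obtain b where "b \<in> B" "b < min T (t0 + h)"
    using cInf_lessD[of B "min T (t0 + h)"] B h \<open>t0 < T\<close> by (auto simp: t0_def)
  moreover have "t0 \<le> b"
    using cInf_lower[OF _ B(2)] \<open>b \<in> B\<close> by (simp add: t0_def)
  ultimately show False
    using h(2) by (auto simp: B_def)
qed

lemma inward_on_box_imp_invariant:
  fixes f :: "real^'n \<Rightarrow> real^'q \<Rightarrow> real^'n"
  assumes lip: "locally_lipschitz_in_x f" and W: "compact W" and box: "xl \<le> xu"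
    and inward: "inward_on_box f xl xu W"
  shows "robustly_forward_invariant f {xl..xu} W"
  unfolding robustly_forward_invariant_def
proof (intro ballI allI impI)
  fix x0 w T x t
  assume x0: "x0 \<in> {xl..xu}" and w: "piecewise_continuous w \<and> (\<forall>t. w t \<in> W)"
    and sol: "is_solution f w x0 T x" and t: "t \<in> {0..T}"
  show "x t \<in> {xl..xu}"
  proof (rule continuation_in_closed_set[where C = "{xl..xu}", OF _ _ _ _ t])
    show "closed {xl..xu}"
      unfolding interval_cbox_cart by (rule closed_cbox)
    show "continuous_on {0..T} x" "x 0 \<in> {xl..xu}"
      using sol x0 by (simp_all add: is_solution_def)
    show "\<exists>h>0. \<forall>t\<in>{t0..min T (t0 + h)}. x t \<in> {xl..xu}"
      if "0 \<le> t0" "t0 < T" "x t0 \<in> {xl..xu}" for t0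
      using solution_stays_in_box_locally[OF lip W box inward _ sol that] w by blast
  qed
qed

lemma integral_lipschitz_comp_dist_le:
  fixes G :: "'a::euclidean_space \<Rightarrow> 'a" and u v :: "real \<Rightarrow>\<^sub>C 'a"
  assumes G: "L-lipschitz_on UNIV G" and s: "0 \<le> s"
  shows "dist (integral {0..s} (\<lambda>r. G (u r))) (integral {0..s} (\<lambda>r. G (v r))) \<le> L * s * dist u v"
proof -
  have Gc: "continuous_on A (\<lambda>r. G (w r))" for A and w :: "real \<Rightarrow>\<^sub>C 'a"
    by (rule continuous_on_compose2[OF lipschitz_on_continuous_on[OF G]]) auto
  have "dist (integral {0..s} (\<lambda>r. G (u r))) (integral {0..s} (\<lambda>r. G (v r))) =
      norm (integral {0..s} (\<lambda>r. G (u r) - G (v r)))"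
    by (simp add: dist_norm integral_diff integrable_continuous_real Gc)
  also have "\<dots> \<le> (L * dist u v) * (s - 0)"
  proof (rule integral_bound)
    fix r
    have "norm (G (u r) - G (v r)) \<le> L * dist (u r) (v r)"
      using lipschitz_onD[OF G] by (simp add: dist_norm)
    also have "\<dots> \<le> L * dist u v"
      using lipschitz_on_nonneg[OF G] by (intro mult_left_mono dist_bounded)
    finally show "norm (G (u r) - G (v r)) \<le> L * dist u v" .
  qed (use s Gc in \<open>auto intro: continuous_on_diff\<close>)
  finally show ?thesis
    by (simp add: mult_ac)
qed

text \<open>Picard iteration: with \<open>L T < 1\<close> the integral operator is a contraction on bounded
  continuous functions, which we obtain from functions on \<open>[0, T]\<close> by clamping the time.\<close>
lemma lipschitz_integral_equation_solution:
  fixes G :: "'a::euclidean_space \<Rightarrow> 'a" and T :: real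
  assumes G: "L-lipschitz_on UNIV G" and T: "0 \<le> T" "L * T < 1"
  obtains x where "continuous_on {0..T} x"
    "\<And>t. t \<in> {0..T} \<Longrightarrow> x t = p + integral {0..t} (\<lambda>s. G (x s))"
proof -
  define F where "F u t = p + integral {0..t} (\<lambda>s. G (apply_bcontfun u s))"
    for u :: "real \<Rightarrow>\<^sub>C 'a" and t :: real
  have clamp_T: "clamp 0 T t \<in> {0..T}" for t
    using clamp_in_interval[of 0 T t] T by (simp add: cbox_interval)
  define Phi where "Phi u = Bcontfun (\<lambda>t. F u (clamp 0 T t))" for u
  have Phi: "apply_bcontfun (Phi u) t = F u (clamp 0 T t)" for u t
  proof -
    have "continuous_on (cbox 0 T) (F u)"
      unfolding F_def cbox_interval
      by (intro continuous_intros indefinite_integral_continuous_1 integrable_continuous_real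
          continuous_on_compose2[OF lipschitz_on_continuous_on[OF G]]) auto
    then obtain g :: "real \<Rightarrow>\<^sub>C 'a" where g: "\<And>t. g t = F u (clamp 0 T t)"
      by (rule continuous_on_cbox_bcontfunE) blast
    then have "Phi u = g"
      unfolding Phi_def by (metis apply_bcontfun_inverse ext)
    then show ?thesis
      using g by simp
  qed
  have "dist (Phi u) (Phi v) \<le> (L * T) * dist u v" for u v
  proof (rule dist_bound)
    fix t
    have "dist (Phi u t) (Phi v t) \<le> L * clamp 0 T t * dist u v"
      using integral_lipschitz_comp_dist_le[OF G] clamp_T[of t] by (simp add: Phi F_def)
    also have "\<dots> \<le> (L * T) * dist u v"
      using clamp_T[of t] lipschitz_on_nonneg[OF G] by (intro mult_right_mono mult_left_mono) auto
    finally show "dist (Phi u t) (Phi v t) \<le> (L * T) * dist u v" .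
  qed
  then obtain u where u: "Phi u = u"
    using banach_fix_type[of "L * T" Phi] lipschitz_on_nonneg[OF G] T by auto
  show thesis
  proof
    show "continuous_on {0..T} (apply_bcontfun u)"
      by simp
    fix t assume "t \<in> {0..T}"
    then have "clamp 0 T t = t"
      by (simp add: cbox_interval)
    then show "u t = p + integral {0..t} (\<lambda>s. G (u s))"
      using Phi[of u t] by (simp add: u F_def)
  qed
qed

lemma lipschitz_on_comp_closest_point_cball:
  fixes g :: "'a::euclidean_space \<Rightarrow> 'b::real_normed_vector"
  assumes g: "L-lipschitz_on (cball p r) g" and r: "0 < r"
  shows "L-lipschitz_on UNIV (\<lambda>y. g (closest_point (cball p r) y))"
    and "norm (g (closest_point (cball p r) y)) \<le> norm (g p) + L * r"
proof -
  have Q: "closest_point (cball p r) y \<in> cball p r" for y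
    using r by (intro closest_point_in_set) auto
  have "1-lipschitz_on UNIV (closest_point (cball p r))"
    using r closest_point_lipschitz[of "cball p r"] by (intro lipschitz_onI) auto
  moreover have "L-lipschitz_on (range (closest_point (cball p r))) g"
    using g by (rule lipschitz_on_subset) (use Q in auto)
  ultimately show "L-lipschitz_on UNIV (\<lambda>y. g (closest_point (cball p r) y))"
    using lipschitz_on_compose2 by fastforce
  have "dist (g (closest_point (cball p r) y)) (g p) \<le> L * dist (closest_point (cball p r) y) p"
    using Q r by (intro lipschitz_onD[OF g]) auto
  also have "\<dots> \<le> L * r"
    using Q[of y] lipschitz_on_nonneg[OF g] by (intro mult_left_mono) (auto simp: dist_commute)
  finally show "norm (g (closest_point (cball p r) y)) \<le> norm (g p) + L * r"
    using norm_triangle_ineq2[of "g (closest_point (cball p r) y)" "g p"] by (simp add: dist_norm)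
qed

text \<open>After composing with the nearest-point retraction onto the ball the field is globally
  Lipschitz and bounded; for small \<open>T\<close> the resulting solution stays in the ball, where the
  retraction is the identity.\<close>
lemma local_solution_in_cball:
  fixes g :: "'a::euclidean_space \<Rightarrow> 'a"
  assumes g: "L-lipschitz_on (cball p r) g" and r: "0 < r"
  shows "\<exists>T>(0::real). \<exists>x. continuous_on {0..T} x \<and> x 0 = p \<and>
    (\<forall>t\<in>{0..T}. ((\<lambda>s. g (x s)) has_integral (x t - p)) {0..t} \<and> x t \<in> cball p r)"
proof -
  define Q where "Q = closest_point (cball p r)"
  note G = lipschitz_on_comp_closest_point_cball[OF g r, folded Q_def]
  define M where "M = norm (g p) + L * r + 1"
  have GM: "norm (g (Q y)) \<le> M" for y
    using G(2)[of y] by (simp add: M_def)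
  have L: "0 \<le> L" and M: "0 < M"
    using lipschitz_on_nonneg[OF g] r by (auto simp: M_def intro: add_nonneg_pos)
  define T where "T = min (1 / (L + 1)) (r / M)"
  have T: "0 < T" "L * T < 1" "M * T \<le> r"
    using L M r by (auto simp: T_def min_def field_simps)
  obtain x where cx: "continuous_on {0..T} x"
    and x: "\<And>t. t \<in> {0..T} \<Longrightarrow> x t = p + integral {0..t} (\<lambda>s. g (Q (x s)))"
    using lipschitz_integral_equation_solution[OF G(1) _ T(2)] T(1) by auto
  have Gx: "continuous_on {0..t} (\<lambda>s. g (Q (x s)))" if "t \<le> T" for t
    by (rule continuous_on_compose2[OF lipschitz_on_continuous_on[OF G(1)] continuous_on_subset[OF cx]])
      (use that in auto)
  have x_ball: "x t \<in> cball p r" if "t \<in> {0..T}" for t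
  proof -
    have "dist p (x t) \<le> M * (t - 0)"
      using integral_bound[of 0 t "\<lambda>s. g (Q (x s))" M] x[OF that] GM Gx that by (simp add: dist_norm)
    also have "\<dots> \<le> r"
      using order_trans[OF mult_left_mono[of t T M] T(3)] M that by simp
    finally show ?thesis
      by simp
  qed
  have "((\<lambda>s. g (x s)) has_integral (x t - p)) {0..t}" if t: "t \<in> {0..T}" for t
  proof -
    have "((\<lambda>s. g (Q (x s))) has_integral (x t - p)) {0..t}"
      using x[OF t] Gx t by (auto intro!: integrable_integral integrable_continuous_real)
    then show ?thesis
      by (rule has_integral_eq[rotated]) (use t x_ball in \<open>auto simp: Q_def closest_point_self\<close>)
  qed
  moreover have "x 0 = p"
    using x[of 0] T by simp
  ultimately have "continuous_on {0..T} x \<and> x 0 = p \<and>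
      (\<forall>t\<in>{0..T}. ((\<lambda>s. g (x s)) has_integral (x t - p)) {0..t} \<and> x t \<in> cball p r)"
    using cx x_ball by blast
  then show ?thesis
    using T(1) by blast
qed

lemma solution_descends:
  fixes f :: "real^'n \<Rightarrow> real^'q \<Rightarrow> real^'n"
  assumes cont: "continuous_on UNIV (\<lambda>z. f z v)" and lip: "locally_lipschitz_in_x f"
    and descent: "a \<bullet> f y v < 0"
  obtains T x where "is_solution f (\<lambda>_. v) y T x" "a \<bullet> x T < a \<bullet> y"
proof -
  define c where "c = - (a \<bullet> f y v)"
  have "continuous_on UNIV (\<lambda>z. a \<bullet> f z v)"
    using cont by (intro continuous_intros)
  then obtain r where r: "r > 0" "\<And>z. dist z y < r \<Longrightarrow> dist (a \<bullet> f z v) (a \<bullet> f y v) < c / 2"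
    using descent unfolding continuous_on_iff c_def by (metis UNIV_I half_gt_zero neg_0_less_iff_less)
  obtain e L where e: "e > 0" "L-lipschitz_on (ball y e) (\<lambda>z. f z v)"
    using locally_lipschitz_in_x_uniform[OF lip, of "{v}" y] by auto
  define \<rho> where "\<rho> = min (r / 2) (e / 2)"
  have \<rho>: "0 < \<rho>"
    using r e by (simp add: \<rho>_def)
  have lip_\<rho>: "L-lipschitz_on (cball y \<rho>) (\<lambda>z. f z v)"
    using e(2) by (rule lipschitz_on_subset) (use e in \<open>auto simp: \<rho>_def\<close>)
  obtain T x where T: "0 < (T::real)" and cx: "continuous_on {0..T} x" and x0: "x 0 = y"
    and sol: "\<forall>t\<in>{0..T}. ((\<lambda>s. f (x s) v) has_integral (x t - y)) {0..t} \<and> x t \<in> cball y \<rho>"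
    using local_solution_in_cball[OF lip_\<rho> \<rho>] by blast
  have "is_solution f (\<lambda>_. v) y T x"
    using T cx x0 sol by (simp add: is_solution_def)
  moreover have "a \<bullet> x T < a \<bullet> y"
  proof -
    have bound: "a \<bullet> f (x s) v \<le> - c / 2" if "s \<in> {0..T}" for s
    proof -
      have "x s \<in> cball y \<rho>"
        using sol that by blast
      then have "dist (x s) y < r"
        using r(1) by (simp add: \<rho>_def dist_commute)
      then show ?thesis
        using r(2)[of "x s"] by (simp add: dist_real_def c_def)
    qed
    have "((\<lambda>s. f (x s) v) has_integral (x T - y)) {0..T}"
      using sol T by simp
    then have "((\<lambda>s. a \<bullet> f (x s) v) has_integral a \<bullet> (x T - y)) {0..T}"
      using has_integral_linear[OF _ bounded_linear_inner_right] by (simp add: o_def)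
    moreover have "((\<lambda>s. - c / 2) has_integral T * (- c / 2)) {0..T}"
      using has_integral_const_real[of "- c / 2" 0 T] T by simp
    ultimately have "a \<bullet> (x T - y) \<le> T * (- c / 2)"
      by (rule has_integral_le) (rule bound)
    also have "\<dots> < 0"
      using T descent by (simp add: c_def mult_pos_neg)
    finally show ?thesis
      by (simp add: inner_diff_right)
  qed
  ultimately show thesis
    using that by blast
qed

lemma invariant_imp_inward_on_box:
  fixes f :: "real^'n \<Rightarrow> real^'q \<Rightarrow> real^'n"
  assumes cont: "continuous_on UNIV (\<lambda>(x, w). f x w)" and lip: "locally_lipschitz_in_x f"
    and inv: "robustly_forward_invariant f {xl..xu} W"
  shows "inward_on_box f xl xu W"
proof -
  have stays: "x T \<in> {xl..xu}" if "is_solution f (\<lambda>_. v) y T x" "y \<in> {xl..xu}" "v \<in> W" for v y T x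
  proof -
    have "piecewise_continuous (\<lambda>_::real. v)"
      unfolding piecewise_continuous_def by (intro allI exI[of _ "{}"]) auto
    then have "\<forall>t\<in>{0..T}. x t \<in> {xl..xu}"
      using inv that unfolding robustly_forward_invariant_def by blast
    moreover have "T \<in> {0..T}"
      using that(1) by (simp add: is_solution_def)
    ultimately show ?thesis
      by blast
  qed
  have descent_impossible: "0 \<le> a \<bullet> f y v" if "y \<in> {xl..xu}" "v \<in> W" "\<forall>z\<in>{xl..xu}. a \<bullet> y \<le> a \<bullet> z" for a y v
  proof (rule ccontr)
    assume "\<not> 0 \<le> a \<bullet> f y v"
    then have "a \<bullet> f y v < 0"
      by simp
    moreover have "continuous_on UNIV (\<lambda>z. (\<lambda>(x, w). f x w) (z, v))"
      by (rule continuous_on_compose2[OF cont]) (simp_all add: continuous_on_Pair)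
    ultimately obtain T x where "is_solution f (\<lambda>_. v) y T x" "a \<bullet> x T < a \<bullet> y"
      by (auto intro: solution_descends[OF _ lip])
    moreover have "x T \<in> {xl..xu}"
      using stays[OF \<open>is_solution f (\<lambda>_. v) y T x\<close> that(1,2)] .
    ultimately show False
      using that(3) by (simp add: not_le[symmetric])
  qed
  show ?thesis
    unfolding inward_on_box_def
  proof (intro ballI allI conjI impI)
    fix y v j assume y: "y \<in> {xl..xu}" and v: "v \<in> W"
    show "0 \<le> f y v $ j" if "y $ j = xl $ j"
    proof -
      have "\<forall>z\<in>{xl..xu}. axis j 1 \<bullet> y \<le> axis j 1 \<bullet> z"
        using that by (auto simp: inner_axis' less_eq_vec_def)
      from descent_impossible[OF y v this] show ?thesis
        by (simp add: inner_axis')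
    qed
    show "f y v $ j \<le> 0" if "y $ j = xu $ j"
    proof -
      have "\<forall>z\<in>{xl..xu}. axis j (-1) \<bullet> y \<le> axis j (-1) \<bullet> z"
        using that by (auto simp: inner_axis' less_eq_vec_def)
      from descent_impossible[OF y v this] show ?thesis
        by (simp add: inner_axis')
    qed
  qed
qed

lemma box_lower_face:
  "xl \<le> xu \<Longrightarrow> {xl..repl xu j xl} = {y \<in> {xl..xu}. y $ j = xl $ j}"
  by (auto simp: less_eq_vec_def repl_def) (metis order_antisym)+

lemma box_upper_face:
  "xl \<le> xu \<Longrightarrow> {repl xl j xu..xu} = {y \<in> {xl..xu}. y $ j = xu $ j}"
  by (auto simp: less_eq_vec_def repl_def) (metis order_antisym)+

lemma emb_sign_imp_inward_on_box:
  assumes incl: "localized_inclusion_function S f Fl Fu"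
    and box: "xl \<le> xu" "{xl..xu} \<subseteq> S" and W: "wl \<le> wu"
    and emb: "0 \<le> emb_lower Fl xl xu wl wu" "emb_upper Fu xl xu wl wu \<le> 0"
  shows "inward_on_box f xl xu {wl..wu}"
  unfolding inward_on_box_def
proof (intro ballI allI conjI impI)
  fix y v j assume y: "y \<in> {xl..xu}" and v: "v \<in> {wl..wu}"
  show "0 \<le> f y v $ j" if "y $ j = xl $ j"
  proof -
    have "xl \<le> repl xu j xl" "{xl..repl xu j xl} \<subseteq> S" "y \<in> {xl..repl xu j xl}"
      using box y that by (auto simp: box_lower_face) (auto simp: less_eq_vec_def repl_def)
    then have "Fl xl (repl xu j xl) wl wu \<le> f y v"
      using incl W v unfolding localized_inclusion_function_def by blast
    moreover have "0 \<le> Fl xl (repl xu j xl) wl wu $ j"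
      using emb(1) by (simp add: less_eq_vec_def emb_lower_def)
    ultimately show ?thesis
      by (meson less_eq_vec_def order_trans)
  qed
  show "f y v $ j \<le> 0" if "y $ j = xu $ j"
  proof -
    have "repl xl j xu \<le> xu" "{repl xl j xu..xu} \<subseteq> S" "y \<in> {repl xl j xu..xu}"
      using box y that by (auto simp: box_upper_face) (auto simp: less_eq_vec_def repl_def)
    then have "f y v \<le> Fu (repl xl j xu) xu wl wu"
      using incl W v unfolding localized_inclusion_function_def by blast
    moreover have "Fu (repl xl j xu) xu wl wu $ j \<le> 0"
      using emb(2) by (simp add: less_eq_vec_def emb_upper_def)
    ultimately show ?thesis
      by (meson less_eq_vec_def order_trans)
  qed
qed

lemma minimal_inward_on_box_imp_emb_sign:
  assumes min: "minimal_inclusion_function f Fl Fu"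
    and box: "xl \<le> xu" and W: "wl \<le> wu" and inward: "inward_on_box f xl xu {wl..wu}"
  shows "0 \<le> emb_lower Fl xl xu wl wu" "emb_upper Fu xl xu wl wu \<le> 0"
proof -
  have "0 \<le> emb_lower Fl xl xu wl wu $ j" for j
  proof -
    have "emb_lower Fl xl xu wl wu $ j =
        Inf {f y v $ j | y v. y \<in> {xl..repl xu j xl} \<and> v \<in> {wl..wu}}"
      using min box W unfolding minimal_inclusion_function_def emb_lower_def
      by (simp add: less_eq_vec_def repl_def)
    also have "0 \<le> \<dots>"
      using inward box W by (intro cInf_greatest) (auto simp: box_lower_face inward_on_box_def)
    finally show ?thesis .
  qed
  then show "0 \<le> emb_lower Fl xl xu wl wu"
    by (simp add: less_eq_vec_def)
  have "emb_upper Fu xl xu wl wu $ j \<le> 0" for j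
  proof -
    have "emb_upper Fu xl xu wl wu $ j =
        Sup {f y v $ j | y v. y \<in> {repl xl j xu..xu} \<and> v \<in> {wl..wu}}"
      using min box W unfolding minimal_inclusion_function_def emb_upper_def
      by (simp add: less_eq_vec_def repl_def)
    also have "\<dots> \<le> 0"
      using inward box W by (intro cSup_least) (auto simp: box_upper_face inward_on_box_def)
    finally show ?thesis .
  qed
  then show "emb_upper Fu xl xu wl wu \<le> 0"
    by (simp add: less_eq_vec_def)
qed

theorem proposition1:
  fixes f :: "real^'n \<Rightarrow> real^'q \<Rightarrow> real^'n"
    and Fl Fu :: "('n,'q) incl_fun"
    and S :: "(real^'n) set"
    and wl wu :: "real^'q"
    and xl xu :: "real^'n"
  assumes cont: "continuous_on UNIV (\<lambda>(x, w). f x w)"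
    and lip: "locally_lipschitz_in_x f"
    and W: "wl \<le> wu"
    and incl: "localized_inclusion_function S f Fl Fu"
    and box: "xl \<le> xu" "{xl..xu} \<subseteq> S"
  shows "(emb_lower Fl xl xu wl wu \<ge> 0 \<and> emb_upper Fu xl xu wl wu \<le> 0
            \<longrightarrow> robustly_forward_invariant f {xl..xu} {wl..wu})
       \<and> (minimal_inclusion_function f Fl Fu \<longrightarrow>
            robustly_forward_invariant f {xl..xu} {wl..wu}
            \<longrightarrow> emb_lower Fl xl xu wl wu \<ge> 0 \<and> emb_upper Fu xl xu wl wu \<le> 0)"
proof (intro conjI impI)
  assume "0 \<le> emb_lower Fl xl xu wl wu \<and> emb_upper Fu xl xu wl wu \<le> 0"
  then have "inward_on_box f xl xu {wl..wu}"
    using emb_sign_imp_inward_on_box[OF incl box W] by blast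
  then show "robustly_forward_invariant f {xl..xu} {wl..wu}"
    using inward_on_box_imp_invariant[OF lip _ box(1)] by (simp add: interval_cbox_cart)
next
  assume min: "minimal_inclusion_function f Fl Fu"
    and inv: "robustly_forward_invariant f {xl..xu} {wl..wu}"
  have "inward_on_box f xl xu {wl..wu}"
    using cont lip inv by (rule invariant_imp_inward_on_box)
  with min box(1) W show "0 \<le> emb_lower Fl xl xu wl wu" "emb_upper Fu xl xu wl wu \<le> 0"
    by (rule minimal_inward_on_box_imp_emb_sign)+
qed

end
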